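(* At every time during the execution of DASH (described in the context) on an initially connected graph, against any sequence of node deletions, the graph $G'$ formed by the surviving nodes and the healing edges added by DASH is a forest.
   Context: Model: a network is an undirected graph. Initially it is a connected graph $G_0$ on $n$ nodes. In each round an adversary deletes one surviving node $v$ together with its incident edges, and then DASH adds edges. $G$ denotes the current network; $E'$ is the set of healing edges added so far by DASH whose endpoints both survive; $G'=(V(G),E')$. $N(u,G)$, $N(u,G')$ denote neighbor sets in $G$, $G'$; $\delta(u)=\deg_G(u)-\deg_{G_0}(u)$. DASH: initially every node receives an ID drawn independently and uniformly from $[0,1]$ (its initial ID). When $v$ is deleted (quantities evaluated just before the deletion): partition the nodes of $N(v,G)$ whose current ID differs from that of $v$ into classes of equal current ID, and let $UN(v,G)$ consist of one node per class, the one with lowest initial ID. Let $S=UN(v,G)\cup N(v,G')$. Order $S$ by increasing $\delta$ and place the nodes in this order into a complete binary tree with $|S|$ positions, filled level by level from the top and left to right; add to the network and to $E'$ the edge between each node of $S$ and the node at its parent position. Then all nodes of the connected component of $G'$ containing $S$ set their ID to the minimum current ID among nodes of $S$. *)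

theory Defs
  imports Complex_Main
begin

text \<open>Simple undirected graphs: an edge is a two-element set of nodes.\<close>

definition adj :: "'a set set \<Rightarrow> ('a \<times> 'a) set" where
  "adj E = {(x, y). {x, y} \<in> E \<and> x \<noteq> y}"

definition nbrs :: "'a set set \<Rightarrow> 'a \<Rightarrow> 'a set" where
  "nbrs E u = {w. w \<noteq> u \<and> {u, w} \<in> E}"

definition wf_graph :: "'a set \<Rightarrow> 'a set set \<Rightarrow> bool" where
  "wf_graph V E \<longleftrightarrow> (\<forall>e\<in>E. \<exists>x y. x \<noteq> y \<and> e = {x, y} \<and> x \<in> V \<and> y \<in> V)"

definition connected_graph :: "'a set \<Rightarrow> 'a set set \<Rightarrow> bool" where
  "connected_graph V E \<longleftrightarrow> (\<forall>x\<in>V. \<forall>y\<in>V. (x, y) \<in> (adj E)\<^sup>*)"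

definition is_cycle :: "'a set set \<Rightarrow> 'a list \<Rightarrow> bool" where
  "is_cycle E c \<longleftrightarrow> length c \<ge> 3 \<and> distinct c \<and>
     (\<forall>i. Suc i < length c \<longrightarrow> {c ! i, c ! Suc i} \<in> E) \<and> {last c, hd c} \<in> E"

definition is_forest :: "'a set \<Rightarrow> 'a set set \<Rightarrow> bool" where
  "is_forest V E \<longleftrightarrow> wf_graph V E \<and> \<not> (\<exists>c. is_cycle E c)"

definition deg :: "'a set set \<Rightarrow> 'a \<Rightarrow> nat" where
  "deg E u = card {e\<in>E. u \<in> e}"

record 'a dash_state =
  nodes :: "'a set"
  gedges :: "'a set set"
  hedges :: "'a set set"     (* E': surviving healing edges *)
  cid :: "'a \<Rightarrow> real"

text \<open>Un_set(v,G): one node per class of equal current ID among the candidates, namely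
  one with lowest initial ID in its class.\<close>
definition is_UN :: "'a set \<Rightarrow> ('a \<Rightarrow> real) \<Rightarrow> ('a \<Rightarrow> real) \<Rightarrow> 'a set \<Rightarrow> bool" where
  "is_UN Cand idf init Un_set \<longleftrightarrow> Un_set \<subseteq> Cand \<and>
     (\<forall>u\<in>Cand. \<exists>w\<in>Un_set. idf w = idf u) \<and>
     (\<forall>w1\<in>Un_set. \<forall>w2\<in>Un_set. idf w1 = idf w2 \<longrightarrow> w1 = w2) \<and>
     (\<forall>w\<in>Un_set. \<forall>u\<in>Cand. idf u = idf w \<longrightarrow> init w \<le> init u)"

text \<open>Edges of the complete binary tree with positions 0..length s - 1 filled level by level:
  the parent of (0-indexed) position i > 0 is (i - 1) div 2.\<close>
definition tree_edges :: "'a list \<Rightarrow> 'a set set" where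
  "tree_edges s = {{s ! i, s ! ((i - 1) div 2)} | i. 0 < i \<and> i < length s}"

text \<open>One DASH round: the adversary deletes v from state st, DASH may produce st'
  (nondeterminism only in tie-breaking).\<close>
definition dash_step :: "'a set set \<Rightarrow> ('a \<Rightarrow> real) \<Rightarrow> 'a dash_state \<Rightarrow> 'a \<Rightarrow> 'a dash_state \<Rightarrow> bool" where
  "dash_step E0 init st v st' \<longleftrightarrow> v \<in> nodes st \<and>
    (\<exists>Un_set s. let G = gedges st; H = hedges st; idf = cid st;
               \<delta> = (\<lambda>u. int (deg G u) - int (deg E0 u));
               S = Un_set \<union> nbrs H v;
               T = tree_edges s;
               V' = nodes st - {v};
               H' = {e\<in>H. v \<notin> e} \<union> T;
               comp = {u\<in>V'. \<exists>w\<in>S. (w, u) \<in> (adj H')\<^sup>*}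
           in is_UN {u\<in>nbrs G v. idf u \<noteq> idf v} idf init Un_set \<and>
              distinct s \<and> set s = S \<and> sorted_wrt (\<lambda>a b. \<delta> a \<le> \<delta> b) s \<and>
              st' = \<lparr> nodes = V', gedges = {e\<in>G. v \<notin> e} \<union> T, hedges = H',
                      cid = (\<lambda>u. if u \<in> comp then Min (idf ` S) else idf u) \<rparr>)"

inductive dash_reach :: "'a set \<Rightarrow> 'a set set \<Rightarrow> ('a \<Rightarrow> real) \<Rightarrow> 'a dash_state \<Rightarrow> bool"
  for V0 E0 init where
  init: "dash_reach V0 E0 init \<lparr> nodes = V0, gedges = E0, hedges = {}, cid = init \<rparr>"
| step: "dash_reach V0 E0 init st \<Longrightarrow> dash_step E0 init st v st' \<Longrightarrow> dash_reach V0 E0 init st'"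

end

theory Submission imports Defs begin

text \<open>Invariant: every edge of \<open>G'\<close> is a bridge of \<open>G'\<close>, and current IDs are constant on the
  components of \<open>G'\<close>. When \<open>v\<close> is deleted, all healing neighbours of \<open>v\<close> carry the ID of \<open>v\<close>,
  while the representatives in \<open>UN(v,G)\<close> carry pairwise distinct IDs different from it; and two
  healing neighbours of \<open>v\<close> were connected only through \<open>v\<close>, as their edges to \<open>v\<close> were bridges.
  So after deleting \<open>v\<close> the nodes of \<open>S\<close> lie in pairwise different components, the binary tree on
  \<open>S\<close> only adds bridges, and resetting IDs on the merged component keeps them constant on
  components. A graph all of whose edges are bridges has no cycle.\<close>

definition every_edge_bridge :: "'a set set \<Rightarrow> bool" where
  "every_edge_bridge E \<longleftrightarrow>
     (\<forall>e\<in>E. \<forall>x y. e = {x, y} \<longrightarrow> x \<noteq> y \<longrightarrow> (x, y) \<notin> (adj (E - {e}))\<^sup>*)"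

lemma adj_iff [simp]: "(x, y) \<in> adj E \<longleftrightarrow> {x, y} \<in> E \<and> x \<noteq> y"
  by (simp add: adj_def)

lemma rtrancl_adj_sym: "(x, y) \<in> (adj E)\<^sup>* \<Longrightarrow> (y, x) \<in> (adj E)\<^sup>*"
proof -
  have "sym (adj E)" by (auto simp: sym_def insert_commute)
  then show "(x, y) \<in> (adj E)\<^sup>* \<Longrightarrow> (y, x) \<in> (adj E)\<^sup>*" by (meson sym_rtrancl symD)
qed

lemma rtrancl_adj_mono: "E \<subseteq> F \<Longrightarrow> (x, y) \<in> (adj E)\<^sup>* \<Longrightarrow> (x, y) \<in> (adj F)\<^sup>*"
  by (erule rtrancl_mono[THEN subsetD, rotated]) (auto simp: adj_def)

lemma rtrancl_adj_insert:
  assumes "(x, y) \<in> (adj (insert {a, b} E))\<^sup>*"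
  shows "(x, y) \<in> (adj E)\<^sup>* \<or> ((x, a) \<in> (adj E)\<^sup>* \<and> (b, y) \<in> (adj E)\<^sup>*)
           \<or> ((x, b) \<in> (adj E)\<^sup>* \<and> (a, y) \<in> (adj E)\<^sup>*)"
  using assms
proof (induction rule: rtrancl_induct)
  case base then show ?case by simp
next
  case (step y z)
  show ?case
  proof (cases "{y, z} \<in> E")
    case True
    with step have "(y, z) \<in> adj E" by simp
    with step.IH show ?thesis by (meson rtrancl.rtrancl_into_rtrancl)
  next
    case False
    with step.hyps(2) have "(y = a \<and> z = b) \<or> (y = b \<and> z = a)" by (auto simp: doubleton_eq_iff)
    with step.IH show ?thesis by (metis rtrancl_adj_sym rtrancl.rtrancl_refl rtrancl_trans)
  qed
qed

lemma rtrancl_adj_Un_avoiding: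
  assumes "\<forall>e\<in>F. e \<subseteq> A" and "\<forall>a\<in>A. (x, a) \<notin> (adj E)\<^sup>*" and "(x, y) \<in> (adj (E \<union> F))\<^sup>*"
  shows "(x, y) \<in> (adj E)\<^sup>*"
  using assms(3)
proof (induction rule: rtrancl_induct)
  case base then show ?case by simp
next
  case (step y z)
  have "{y, z} \<in> E"
  proof (rule ccontr)
    assume "{y, z} \<notin> E"
    with step.hyps(2) assms(1) have "y \<in> A" by auto
    with step.IH assms(2) show False by blast
  qed
  with step.hyps(2) have "(y, z) \<in> adj E" by simp
  with step.IH show ?case by (rule rtrancl_into_rtrancl)
qed

lemma every_edge_bridge_subset:
  assumes "every_edge_bridge F" and "E \<subseteq> F"
  shows "every_edge_bridge E"
  unfolding every_edge_bridge_def
proof (intro ballI allI impI notI)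
  fix e x y
  assume e: "e \<in> E" "e = {x, y}" "x \<noteq> y" and reach: "(x, y) \<in> (adj (E - {e}))\<^sup>*"
  have "E - {e} \<subseteq> F - {e}" using assms(2) by blast
  from rtrancl_adj_mono[OF this reach] have "(x, y) \<in> (adj (F - {e}))\<^sup>*" .
  moreover have "e \<in> F" using e assms(2) by blast
  ultimately show False using assms(1) e unfolding every_edge_bridge_def by simp
qed

lemma every_edge_bridge_insert:
  assumes bridge: "every_edge_bridge E" and "(a, b) \<notin> (adj E)\<^sup>*" and "a \<noteq> b"
  shows "every_edge_bridge (insert {a, b} E)"
  unfolding every_edge_bridge_def
proof (intro ballI allI impI notI)
  fix e x y
  assume e: "e \<in> insert {a, b} E" "e = {x, y}" "x \<noteq> y"
    and reach: "(x, y) \<in> (adj (insert {a, b} E - {e}))\<^sup>*"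
  show False
  proof (cases "e = {a, b}")
    case True
    with reach have "(x, y) \<in> (adj E)\<^sup>*" by (auto intro: rtrancl_adj_mono[rotated])
    with assms(2) True e show False by (metis doubleton_eq_iff rtrancl_adj_sym)
  next
    case False
    let ?E' = "E - {e}"
    from False e have "e \<in> E" by simp
    with bridge e have "(x, y) \<notin> (adj ?E')\<^sup>*" unfolding every_edge_bridge_def by blast
    moreover from False reach have "(x, y) \<in> (adj (insert {a, b} ?E'))\<^sup>*"
      by (simp add: insert_Diff_if)
    ultimately have "((x, a) \<in> (adj ?E')\<^sup>* \<and> (b, y) \<in> (adj ?E')\<^sup>*)
                     \<or> ((x, b) \<in> (adj ?E')\<^sup>* \<and> (a, y) \<in> (adj ?E')\<^sup>*)"
      using rtrancl_adj_insert by metis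
    then have "((x, a) \<in> (adj E)\<^sup>* \<and> (b, y) \<in> (adj E)\<^sup>*) \<or> ((x, b) \<in> (adj E)\<^sup>* \<and> (a, y) \<in> (adj E)\<^sup>*)"
      by (meson Diff_subset rtrancl_adj_mono)
    moreover from \<open>e \<in> E\<close> e have "(x, y) \<in> (adj E)\<^sup>*" by auto
    ultimately show False using assms(2) by (metis rtrancl_adj_sym rtrancl_trans)
  qed
qed

text \<open>Walking the cycle from its head to its last node avoids the closing edge.\<close>
lemma is_cycle_not_every_edge_bridge:
  assumes "is_cycle E c"
  shows "\<not> every_edge_bridge E"
proof
  assume bridge: "every_edge_bridge E"
  let ?n = "length c" and ?e = "{last c, hd c}"
  have n: "?n \<ge> 3" and d: "distinct c" and path: "\<And>i. Suc i < ?n \<Longrightarrow> {c ! i, c ! Suc i} \<in> E"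
    and "?e \<in> E" using assms by (auto simp: is_cycle_def)
  have "c \<noteq> []" using n by auto
  then have hd: "hd c = c ! 0" and last: "last c = c ! (?n - 1)"
    by (simp_all add: hd_conv_nth last_conv_nth)
  have index_eq: "c ! i = c ! j \<longleftrightarrow> i = j" if "i < ?n" "j < ?n" for i j
    using nth_eq_iff_index_eq[OF d that] .
  have "(c ! 0, c ! i) \<in> (adj (E - {?e}))\<^sup>*" if "i < ?n" for i
    using that
  proof (induction i)
    case 0 then show ?case by simp
  next
    case (Suc i)
    have bounds: "i < ?n" "0 < ?n" "?n - 1 < ?n" using Suc.prems by auto
    have "i \<noteq> 0 \<or> Suc i \<noteq> ?n - 1" "i \<noteq> ?n - 1" using n Suc.prems by linarith+
    then have "c ! i \<noteq> c ! 0 \<or> c ! Suc i \<noteq> c ! (?n - 1)" "c ! i \<noteq> c ! (?n - 1)"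
      using index_eq[OF bounds(1,2)] index_eq[OF Suc.prems bounds(3)]
        index_eq[OF bounds(1,3)] by blast+
    then have "{c ! i, c ! Suc i} \<noteq> ?e" by (auto simp: hd last doubleton_eq_iff)
    moreover have "c ! i \<noteq> c ! Suc i" using index_eq[OF bounds(1) Suc.prems] by simp
    ultimately have "(c ! i, c ! Suc i) \<in> adj (E - {?e})" using path[OF Suc.prems] by simp
    with Suc show ?case by (meson Suc_lessD rtrancl.rtrancl_into_rtrancl)
  qed
  then have "(last c, hd c) \<in> (adj (E - {?e}))\<^sup>*"
    using hd last n by (simp add: rtrancl_adj_sym)
  moreover have "last c \<noteq> hd c" using n \<open>c \<noteq> []\<close> index_eq[of "?n - 1" 0] by (simp add: hd last)
  ultimately show False
    using bridge[unfolded every_edge_bridge_def] \<open>?e \<in> E\<close> by blast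
qed

lemma wf_graph_edge_subset: "wf_graph V E \<Longrightarrow> e \<in> E \<Longrightarrow> e \<subseteq> V"
  by (auto simp: wf_graph_def)

lemma wf_graph_Un: "wf_graph V E \<Longrightarrow> wf_graph V F \<Longrightarrow> wf_graph V (E \<union> F)"
  by (auto simp: wf_graph_def)

lemma wf_graph_mono: "wf_graph V E \<Longrightarrow> V \<subseteq> W \<Longrightarrow> wf_graph W E"
  by (fastforce simp: wf_graph_def)

lemma wf_graph_delete_node: "wf_graph V E \<Longrightarrow> wf_graph (V - {v}) {e\<in>E. v \<notin> e}"
  by (fastforce simp: wf_graph_def)

lemma wf_graph_nbrs: "wf_graph V E \<Longrightarrow> v \<in> V \<Longrightarrow> nbrs E v \<subseteq> V - {v}"
  by (auto simp: nbrs_def dest: wf_graph_edge_subset)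

lemma rtrancl_adj_closed:
  assumes "wf_graph V E" and "(w, u) \<in> (adj E)\<^sup>*" and "w \<in> V"
  shows "u \<in> V"
  using assms(2,3) by induction (use assms(1) wf_graph_edge_subset in fastforce)+

lemma tree_edges_Nil: "tree_edges [] = {}"
  by (simp add: tree_edges_def)

lemma parent_index_less: "0 < i \<Longrightarrow> (i - 1) div 2 < (i :: nat)"
  by simp

lemma tree_edges_singleton: "tree_edges [x] = {}"
  by (simp add: tree_edges_def)

lemma tree_edges_snoc:
  assumes "s \<noteq> []"
  shows "tree_edges (s @ [x]) = insert {x, s ! ((length s - 1) div 2)} (tree_edges s)"
proof -
  let ?edge = "\<lambda>t i. {t ! i, t ! ((i - 1) div 2)}" and ?I = "{i. 0 < i \<and> i < length s}"
  have "?edge (s @ [x]) i = ?edge s i" if "i \<in> ?I" for i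
    using that parent_index_less[of i] by (simp add: nth_append)
  then have tail: "?edge (s @ [x]) ` ?I = ?edge s ` ?I" by (rule image_cong[OF refl])
  have last: "?edge (s @ [x]) (length s) = {x, s ! ((length s - 1) div 2)}"
    using assms parent_index_less[of "length s"] by (simp add: nth_append)
  have "{i. 0 < i \<and> i < length (s @ [x])} = insert (length s) ?I"
    using assms by auto
  then have "tree_edges (s @ [x]) = insert (?edge (s @ [x]) (length s)) (?edge (s @ [x]) ` ?I)"
    unfolding tree_edges_def setcompr_eq_image by (simp only: image_insert)
  also have "\<dots> = insert {x, s ! ((length s - 1) div 2)} (tree_edges s)"
    unfolding last tail tree_edges_def setcompr_eq_image ..
  finally show ?thesis .
qed

lemma tree_parent_mem: "s \<noteq> [] \<Longrightarrow> s ! ((length s - 1) div 2) \<in> set s"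
  using parent_index_less[of "length s"] by simp

lemma wf_graph_tree_edges: "distinct s \<Longrightarrow> wf_graph (set s) (tree_edges s)"
proof (induction s rule: rev_induct)
  case Nil then show ?case by (simp add: tree_edges_Nil wf_graph_def)
next
  case (snoc x s)
  show ?case
  proof (cases "s = []")
    case True then show ?thesis by (simp add: tree_edges_singleton wf_graph_def)
  next
    case False
    let ?p = "s ! ((length s - 1) div 2)"
    have "wf_graph (set (s @ [x])) (tree_edges s)"
      using snoc wf_graph_mono[of "set s" "tree_edges s" "set (s @ [x])"] by auto
    moreover have "?p \<in> set s" "x \<notin> set s" using tree_parent_mem[OF False] snoc.prems by auto
    ultimately show ?thesis
      unfolding tree_edges_snoc[OF False] wf_graph_def by (metis insertE in_set_conv_decomp
        set_append Un_iff)
  qed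
qed

text \<open>Each new tree edge joins a node to the tree built so far, whose component it could not reach.\<close>
lemma every_edge_bridge_Un_tree_edges:
  assumes "every_edge_bridge E" and "distinct s"
    and "\<forall>a\<in>set s. \<forall>b\<in>set s. a \<noteq> b \<longrightarrow> (a, b) \<notin> (adj E)\<^sup>*"
  shows "every_edge_bridge (E \<union> tree_edges s)"
  using assms(2,3)
proof (induction s rule: rev_induct)
  case Nil then show ?case using assms(1) by (simp add: tree_edges_Nil)
next
  case (snoc x s)
  show ?case
  proof (cases "s = []")
    case True then show ?thesis using assms(1) by (simp add: tree_edges_singleton)
  next
    case False
    let ?p = "s ! ((length s - 1) div 2)"
    have "?p \<in> set s" using tree_parent_mem[OF False] .
    have "x \<notin> set s" "distinct s" using snoc.prems(1) by auto
    have sep: "\<forall>a\<in>set s. \<forall>b\<in>set s. a \<noteq> b \<longrightarrow> (a, b) \<notin> (adj E)\<^sup>*"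
      using snoc.prems(2) by simp
    have inside: "\<forall>e\<in>tree_edges s. e \<subseteq> set s"
      using wf_graph_tree_edges[OF \<open>distinct s\<close>] wf_graph_edge_subset by blast
    have avoid: "\<forall>a\<in>set s. (x, a) \<notin> (adj E)\<^sup>*"
    proof
      fix a assume "a \<in> set s"
      with \<open>x \<notin> set s\<close> have "x \<noteq> a" by blast
      with \<open>a \<in> set s\<close> snoc.prems(2) show "(x, a) \<notin> (adj E)\<^sup>*" by simp
    qed
    have "every_edge_bridge (E \<union> tree_edges s)" using snoc.IH[OF \<open>distinct s\<close> sep] .
    moreover have "(x, ?p) \<notin> (adj (E \<union> tree_edges s))\<^sup>*"
      using rtrancl_adj_Un_avoiding[OF inside avoid] avoid \<open>?p \<in> set s\<close> by blast
    moreover have "x \<noteq> ?p" using \<open>?p \<in> set s\<close> \<open>x \<notin> set s\<close> by blast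
    ultimately have "every_edge_bridge (insert {x, ?p} (E \<union> tree_edges s))"
      by (rule every_edge_bridge_insert)
    then show ?thesis by (simp add: tree_edges_snoc[OF False])
  qed
qed

lemma nbrs_disconnected_after_delete:
  assumes "every_edge_bridge H" and "u \<in> nbrs H v" and "w \<in> nbrs H v" and "u \<noteq> w"
  shows "(u, w) \<notin> (adj {e\<in>H. v \<notin> e})\<^sup>*"
proof
  assume reach: "(u, w) \<in> (adj {e\<in>H. v \<notin> e})\<^sup>*"
  let ?e = "{v, u}"
  have "?e \<in> H" "v \<noteq> u" using assms(2) by (auto simp: nbrs_def)
  have "{w, v} \<in> H - {?e}" "w \<noteq> v"
    using assms(3,4) by (auto simp: nbrs_def doubleton_eq_iff insert_commute)
  then have "(w, v) \<in> (adj (H - {?e}))\<^sup>*" by (intro r_into_rtrancl) simp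
  moreover have "(u, w) \<in> (adj (H - {?e}))\<^sup>*" by (rule rtrancl_adj_mono[OF _ reach]) auto
  ultimately have "(v, u) \<in> (adj (H - {?e}))\<^sup>*" by (meson rtrancl_adj_sym rtrancl_trans)
  with assms(1) \<open>?e \<in> H\<close> \<open>v \<noteq> u\<close> show False unfolding every_edge_bridge_def by blast
qed

lemma dash_tree_nodes_disconnected:
  assumes bridge: "every_edge_bridge H"
    and ids: "\<forall>x y. (x, y) \<in> (adj H)\<^sup>* \<longrightarrow> idf x = idf y"
    and UN: "is_UN {u\<in>C. idf u \<noteq> idf v} idf init Un_set"
    and u: "u \<in> Un_set \<union> nbrs H v" and w: "w \<in> Un_set \<union> nbrs H v" and "u \<noteq> w"
  shows "(u, w) \<notin> (adj {e\<in>H. v \<notin> e})\<^sup>*"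
proof
  assume reach: "(u, w) \<in> (adj {e\<in>H. v \<notin> e})\<^sup>*"
  have "{e\<in>H. v \<notin> e} \<subseteq> H" by blast
  from rtrancl_adj_mono[OF this reach] ids have same: "idf u = idf w" by blast
  have nbr_id: "idf x = idf v" if "x \<in> nbrs H v" for x
  proof -
    have "(x, v) \<in> (adj H)\<^sup>*"
      using that by (intro r_into_rtrancl) (auto simp: nbrs_def insert_commute)
    with ids show ?thesis by blast
  qed
  have rep_id: "idf x \<noteq> idf v" if "x \<in> Un_set" for x
    using that UN by (auto simp: is_UN_def)
  have rep_inj: "x = y" if "x \<in> Un_set" "y \<in> Un_set" "idf x = idf y" for x y
    using that UN unfolding is_UN_def by blast
  have "u \<notin> Un_set"
  proof
    assume "u \<in> Un_set"
    show False
    proof (cases "w \<in> Un_set")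
      case True with \<open>u \<in> Un_set\<close> rep_inj same \<open>u \<noteq> w\<close> show False by blast
    next
      case False
      with w have "idf w = idf v" by (simp add: nbr_id)
      with rep_id[OF \<open>u \<in> Un_set\<close>] same show False by simp
    qed
  qed
  with u have "idf u = idf v" by (simp add: nbr_id)
  with same rep_id have "w \<notin> Un_set" by metis
  with nbrs_disconnected_after_delete[OF bridge _ _ \<open>u \<noteq> w\<close>] u w \<open>u \<notin> Un_set\<close> reach
  show False by blast
qed

text \<open>A component of \<open>F \<union> T\<close> missing \<open>S\<close> uses no edge of \<open>T\<close>, so it is a component of \<open>F\<close>.\<close>
lemma ids_constant_after_merge:
  fixes m :: 'b
  assumes ids: "\<forall>x y. (x, y) \<in> (adj F)\<^sup>* \<longrightarrow> f x = f y"
    and T: "\<forall>e\<in>T. e \<subseteq> S"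
    and reach: "(x, y) \<in> (adj (F \<union> T))\<^sup>*"
  shows "(if \<exists>w\<in>S. (w, x) \<in> (adj (F \<union> T))\<^sup>* then m else f x)
       = (if \<exists>w\<in>S. (w, y) \<in> (adj (F \<union> T))\<^sup>* then m else f y)"
proof (cases "\<exists>w\<in>S. (w, x) \<in> (adj (F \<union> T))\<^sup>*")
  case True
  then obtain w where "w \<in> S" and "(w, x) \<in> (adj (F \<union> T))\<^sup>*" by blast
  from rtrancl_trans[OF this(2) reach] have "(w, y) \<in> (adj (F \<union> T))\<^sup>*" .
  with True \<open>w \<in> S\<close> show ?thesis by auto
next
  case False
  have "(w, y) \<notin> (adj (F \<union> T))\<^sup>*" if "w \<in> S" for w
    using False that rtrancl_trans[OF _ rtrancl_adj_sym[OF reach]] by blast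
  moreover have avoid: "\<forall>a\<in>S. (x, a) \<notin> (adj F)\<^sup>*"
  proof (intro ballI notI)
    fix a assume "a \<in> S" "(x, a) \<in> (adj F)\<^sup>*"
    then have "(a, x) \<in> (adj (F \<union> T))\<^sup>*" by (meson Un_upper1 rtrancl_adj_mono rtrancl_adj_sym)
    with False \<open>a \<in> S\<close> show False by blast
  qed
  from rtrancl_adj_Un_avoiding[OF T avoid reach] ids have "f x = f y" by blast
  ultimately show ?thesis using False by auto
qed

definition dash_inv :: "'a dash_state \<Rightarrow> bool" where
  "dash_inv st \<longleftrightarrow> wf_graph (nodes st) (gedges st) \<and> wf_graph (nodes st) (hedges st)
     \<and> every_edge_bridge (hedges st)
     \<and> (\<forall>x y. (x, y) \<in> (adj (hedges st))\<^sup>* \<longrightarrow> cid st x = cid st y)"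

lemma dash_inv_init: "wf_graph V0 E0 \<Longrightarrow> dash_inv \<lparr>nodes = V0, gedges = E0, hedges = {}, cid = init\<rparr>"
  by (auto simp: dash_inv_def wf_graph_def every_edge_bridge_def adj_def elim: rtranclE)

lemma dash_step_inv:
  assumes inv: "dash_inv st" and step: "dash_step E0 init st v st'"
  shows "dash_inv st'"
proof -
  let ?G = "gedges st" and ?H = "hedges st" and ?idf = "cid st" and ?V' = "nodes st - {v}"
  obtain Un_set s where v: "v \<in> nodes st"
    and UN: "is_UN {u\<in>nbrs ?G v. ?idf u \<noteq> ?idf v} ?idf init Un_set"
    and s: "distinct s" "set s = Un_set \<union> nbrs ?H v"
    and st': "st' = \<lparr>nodes = ?V', gedges = {e\<in>?G. v \<notin> e} \<union> tree_edges s,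
       hedges = {e\<in>?H. v \<notin> e} \<union> tree_edges s,
       cid = (\<lambda>u. if u \<in> {u\<in>?V'. \<exists>w\<in>Un_set \<union> nbrs ?H v.
                            (w, u) \<in> (adj ({e\<in>?H. v \<notin> e} \<union> tree_edges s))\<^sup>*}
                  then Min (?idf ` (Un_set \<union> nbrs ?H v)) else ?idf u)\<rparr>"
    using step unfolding dash_step_def Let_def by (elim conjE exE) (rule that; assumption)
  let ?F = "{e\<in>?H. v \<notin> e}" and ?T = "tree_edges s"
  have wfG: "wf_graph (nodes st) ?G" and wfH: "wf_graph (nodes st) ?H"
    and bridge: "every_edge_bridge ?H" and ids: "\<forall>x y. (x, y) \<in> (adj ?H)\<^sup>* \<longrightarrow> ?idf x = ?idf y"
    using inv unfolding dash_inv_def by blast+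
  have "Un_set \<subseteq> nbrs ?G v" using UN unfolding is_UN_def by blast
  then have "set s \<subseteq> ?V'" using s(2) wf_graph_nbrs[OF wfG v] wf_graph_nbrs[OF wfH v] by blast
  then have wfT: "wf_graph ?V' ?T" using wf_graph_mono[OF wf_graph_tree_edges[OF s(1)]] by blast
  have wfG': "wf_graph ?V' ({e\<in>?G. v \<notin> e} \<union> ?T)"
    using wf_graph_Un[OF wf_graph_delete_node[OF wfG] wfT] .
  have wfH': "wf_graph ?V' (?F \<union> ?T)"
    using wf_graph_Un[OF wf_graph_delete_node[OF wfH] wfT] .
  have "every_edge_bridge ?F" by (rule every_edge_bridge_subset[OF bridge]) blast
  moreover have "\<forall>a\<in>set s. \<forall>b\<in>set s. a \<noteq> b \<longrightarrow> (a, b) \<notin> (adj ?F)\<^sup>*"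
    using dash_tree_nodes_disconnected[OF bridge ids UN] s(2) by blast
  ultimately have bridge': "every_edge_bridge (?F \<union> ?T)"
    using every_edge_bridge_Un_tree_edges s(1) by blast
  have inside: "\<forall>e\<in>?T. e \<subseteq> set s"
    using wf_graph_tree_edges[OF s(1)] wf_graph_edge_subset by blast
  have idsF: "\<forall>x y. (x, y) \<in> (adj ?F)\<^sup>* \<longrightarrow> ?idf x = ?idf y"
    using ids rtrancl_adj_mono[of ?F ?H] by blast
  have merged: "{u\<in>?V'. \<exists>w\<in>set s. (w, u) \<in> (adj (?F \<union> ?T))\<^sup>*}
      = {u. \<exists>w\<in>set s. (w, u) \<in> (adj (?F \<union> ?T))\<^sup>*}"
    using rtrancl_adj_closed[OF wfH'] \<open>set s \<subseteq> ?V'\<close> by blast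
  show ?thesis
    unfolding st' s(2)[symmetric] dash_inv_def dash_state.simps merged mem_Collect_eq
    using wfG' wfH' bridge' ids_constant_after_merge[OF idsF inside] by blast
qed

lemma dash_reach_inv: "dash_reach V0 E0 init st \<Longrightarrow> wf_graph V0 E0 \<Longrightarrow> dash_inv st"
  by (induction rule: dash_reach.induct) (auto intro: dash_inv_init dash_step_inv)

theorem lemma1:
  fixes V0 :: "'a set" and E0 :: "'a set set" and init :: "'a \<Rightarrow> real"
    and st :: "'a dash_state"
  assumes "finite V0"
    and "wf_graph V0 E0"
    and "connected_graph V0 E0"
    and "\<forall>x\<in>V0. 0 \<le> init x \<and> init x \<le> 1"
    and "dash_reach V0 E0 init st"
  shows "is_forest (nodes st) (hedges st)"
proof -
  have "dash_inv st" using dash_reach_inv[OF assms(5,2)] .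
  then show ?thesis
    unfolding is_forest_def dash_inv_def using is_cycle_not_every_edge_bridge by blast
qed

end
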